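(* For every $T\in L(W,V)$ with $\mathcal{I}_T=(p_1,\ldots,p_k)$, we have $\dim \mathfrak{I}(T)=\deg \prod_{i=1}^{k}p_i$.
   Context: Let $\mathbb{F}_q$ be the finite field with $q$ elements and let $n\ge k$ be positive integers. Let $V$ be an $n$-dimensional $\mathbb{F}_q$-vector space and $W\subseteq V$ a $k$-dimensional subspace. Fix an ordered basis $\mathcal{B}_1=(v_1,\ldots,v_k)$ of $W$ and extend it to an ordered basis $\mathcal{B}_2=(v_1,\ldots,v_n)$ of $V$. $L(W,V)$ denotes the space of $\mathbb{F}_q$-linear maps $W\to V$. $I_{n,k}\in M_{n,k}(\mathbb{F}_q)$ is the matrix whose $(i,j)$ entry is $1$ if $i=j$ and $0$ otherwise. For a nonzero polynomial matrix $A\in M_{n,k}(\mathbb{F}_q[x])$, its $i$-th determinantal divisor $\delta_i(A)$ is the monic gcd of all $i\times i$ minors of $A$ (with $\delta_0=1$), and its invariant factors are the monic polynomials $p_i=\delta_i(A)/\delta_{i-1}(A)$ (for those $i$ with $\delta_i(A)\neq 0$); they satisfy $p_i\mid p_{i+1}$ and are the diagonal entries of the Smith normal form of $A$. For $T\in L(W,V)$ with matrix $B\in M_{n,k}(\mathbb{F}_q)$ with respect to $\mathcal{B}_1,\mathcal{B}_2$, the matrix $xI_{n,k}-B$ always has $\delta_k\neq 0$, hence exactly $k$ invariant factors $p_1\mid p_2\mid\cdots\mid p_k$; these are called the invariant factors of $T$, and we write $\mathcal{I}_T=(p_1,\ldots,p_k)$. $\mathfrak{I}(T)$ denotes the maximal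 $T$-invariant subspace contained in $W$, i.e. the largest subspace $U\subseteq W$ with $T(U)\subseteq U$. *)

theory Defs
  imports "Jordan_Normal_Form.Determinant" "Jordan_Normal_Form.DL_Submatrix"
    "HOL-Computational_Algebra.Polynomial_Factorial"
begin

definition charmat :: "'a::field mat \<Rightarrow> 'a poly mat" where
  "charmat B = mat (dim_row B) (dim_col B)
     (\<lambda>(i,j). (if i = j then [:0, 1:] else 0) - [: B $$ (i,j) :])"

definition det_divisor :: "'a::field_gcd poly mat \<Rightarrow> nat \<Rightarrow> 'a poly" where
  "det_divisor A i = (if i = 0 then 1 else
     Gcd {det (submatrix A I J) | I J. I \<subseteq> {..<dim_row A} \<and> J \<subseteq> {..<dim_col A}
                                     \<and> card I = i \<and> card J = i})"

definition inv_factor :: "'a::field_gcd poly mat \<Rightarrow> nat \<Rightarrow> 'a poly" where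
  "inv_factor A i = det_divisor A i div det_divisor A (i - 1)"

text \<open>Matrix of T : W \<rightarrow> V w.r.t. the bases take k bs of W and bs of V.\<close>
definition matrix_of_map ::
  "('a::field \<Rightarrow> 'v::ab_group_add \<Rightarrow> 'v) \<Rightarrow> 'v list \<Rightarrow> nat \<Rightarrow> ('v \<Rightarrow> 'v) \<Rightarrow> 'a mat" where
  "matrix_of_map scale bs k T =
     mat (length bs) k (\<lambda>(i,j). module.representation scale (set bs) (T (bs ! j)) (bs ! i))"

definition max_inv_subspace ::
  "('a::field \<Rightarrow> 'v::ab_group_add \<Rightarrow> 'v) \<Rightarrow> 'v set \<Rightarrow> ('v \<Rightarrow> 'v) \<Rightarrow> 'v set" where
  "max_inv_subspace scale W T =
     (GREATEST U. module.subspace scale U \<and> U \<subseteq> W \<and> T ` U \<subseteq> U)"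

end

theory Submission
  imports Defs "Jordan_Normal_Form.Char_Poly"
begin

text \<open>Work in a basis of \<open>V\<close> whose first \<open>m = dim \<frakI>(T)\<close> vectors span \<open>\<frakI>(T)\<close> and whose first
  \<open>k\<close> vectors span \<open>W\<close>. Changing bases multiplies \<open>xI\<^sub>n\<^sub>,\<^sub>k - B\<close> on both sides by invertible constant
  matrices, so \<open>\<delta>\<^sub>k\<close>, which is the product of the invariant factors, does not change. In the adapted
  basis \<open>B\<close> is block upper triangular, so the characteristic polynomial \<open>\<chi>\<close> of the leading
  \<open>m \<times> m\<close> block (of degree \<open>m\<close>) divides \<open>\<delta>\<^sub>k\<close>, and \<open>p = \<delta>\<^sub>k / \<chi>\<close> divides every maximal minor of
  the trailing characteristic matrix. If \<open>p\<close> were not constant, Cramer's rule modulo \<open>p\<close> would give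
  a nonzero polynomial vector \<open>w\<close> of degree below \<open>deg p\<close> annihilated modulo \<open>p\<close>; reading the
  coefficients of all such vectors in the remaining basis vectors of \<open>W\<close> yields a \<open>T\<close>-invariant
  subspace of \<open>W\<close> beyond \<open>\<frakI>(T)\<close>, contradicting maximality. Hence \<open>\<delta>\<^sub>k = \<chi>\<close>.\<close>

section \<open>Minors and determinantal divisors\<close>

text \<open>Unlike \<open>submatrix\<close>, the row and column selectors need not be increasing or injective.\<close>
definition sel_mat :: "nat \<Rightarrow> 'a mat \<Rightarrow> (nat \<Rightarrow> nat) \<Rightarrow> (nat \<Rightarrow> nat) \<Rightarrow> 'a mat" where
  "sel_mat t A f h = mat t t (\<lambda>(r,c). A $$ (f r, h c))"

lemma sel_mat_carrier [simp]: "sel_mat t A f h \<in> carrier_mat t t"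
  unfolding sel_mat_def by simp

lemma sel_mat_dim [simp]: "dim_row (sel_mat t A f h) = t" "dim_col (sel_mat t A f h) = t"
  unfolding sel_mat_def by simp_all

lemma sel_mat_index [simp]: "r < t \<Longrightarrow> c < t \<Longrightarrow> sel_mat t A f h $$ (r,c) = A $$ (f r, h c)"
  unfolding sel_mat_def by simp

definition dvd_minors :: "'a::comm_ring_1 \<Rightarrow> 'a mat \<Rightarrow> nat \<Rightarrow> bool" where
  "dvd_minors g A t \<longleftrightarrow> (\<forall>I J. I \<subseteq> {..<dim_row A} \<longrightarrow> J \<subseteq> {..<dim_col A} \<longrightarrow>
     card I = t \<longrightarrow> card J = t \<longrightarrow> g dvd det (submatrix A I J))"

lemma pick_less:
  assumes "I \<subseteq> {..<n}" "card I = k" "r < k"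
  shows "pick I r < n"
  using pick_in_set[of r I] assms by (auto simp: card_gt_0_iff)

lemma pick_lessThan: "c < k \<Longrightarrow> pick {..<k} c = c"
proof -
  assume c: "c < k"
  then have "{a \<in> {..<k}. a < c} = {..<c}" by auto
  then show ?thesis using pick_card_in_set[of c "{..<k}"] c by simp
qed

lemma submatrix_eq_sel_mat:
  assumes "I \<subseteq> {..<dim_row A}" "card I = t" "J \<subseteq> {..<dim_col A}" "card J = t"
  shows "submatrix A I J = sel_mat t A (pick I) (pick J)"
proof -
  have rows: "{i. i < dim_row A \<and> i \<in> I} = I" and cols: "{i. i < dim_col A \<and> i \<in> J} = J"
    using assms by auto
  show ?thesis
    by (rule eq_matI) (use assms rows cols in \<open>auto simp: dim_submatrix submatrix_index\<close>)
qed

lemma submatrix_all_cols_eq_sel_mat: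
  assumes "I \<subseteq> {..<dim_row A}" "card I = dim_col A" "J \<subseteq> {..<dim_col A}" "card J = dim_col A"
  shows "submatrix A I J = sel_mat (dim_col A) A (pick I) id"
proof -
  have "J = {..<dim_col A}" using assms(3,4) by (simp add: card_subset_eq)
  then show ?thesis
    using submatrix_eq_sel_mat[OF assms] by (auto intro!: eq_matI simp: pick_lessThan)
qed

lemma permutes_rank_in_image:
  assumes inj: "inj_on f {0..<t}" and I: "I = f ` {0..<t}"
  defines "\<sigma> \<equiv> \<lambda>r. if r < t then card {a\<in>I. a < f r} else r"
  shows "\<sigma> permutes {0..<t}" "\<And>r. r < t \<Longrightarrow> pick I (\<sigma> r) = f r"
proof -
  have cI: "card I = t" using I inj by (simp add: card_image)
  show pick: "pick I (\<sigma> r) = f r" if "r < t" for r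
    using that I by (simp add: \<sigma>_def pick_card_in_set)
  show "\<sigma> permutes {0..<t}"
  proof (rule inj_on_nat_permutes)
    show "inj_on \<sigma> {0..<t}"
      using pick inj by (metis atLeastLessThan_iff inj_on_def)
    show "\<sigma> \<in> {0..<t} \<rightarrow> {0..<t}"
    proof
      fix r assume r: "r \<in> {0..<t}"
      have "{a\<in>I. a < f r} \<subset> I" using r I by auto
      then have "card {a\<in>I. a < f r} < card I" using I by (simp add: psubset_card_mono)
      then show "\<sigma> r \<in> {0..<t}" using r cI unfolding \<sigma>_def by auto
    qed
  qed (auto simp: \<sigma>_def)
qed

lemma det_permute_rows_cols:
  assumes S: "S \<in> carrier_mat t t" and p: "p permutes {0..<t}" and q: "q permutes {0..<t}"
  shows "det (mat t t (\<lambda>(r,c). S $$ (p r, q c))) = signof p * signof q * det S"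
proof -
  let ?X = "mat t t (\<lambda>(r,c). S $$ (r, q c))"
  have X: "?X \<in> carrier_mat t t" by simp
  have XT: "?X\<^sup>T = mat t t (\<lambda>(i,j). S\<^sup>T $$ (q i, j))"
  proof (rule eq_matI)
    fix i j assume "i < dim_row (mat t t (\<lambda>(i,j). S\<^sup>T $$ (q i, j)))"
      "j < dim_col (mat t t (\<lambda>(i,j). S\<^sup>T $$ (q i, j)))"
    then have ij: "i < t" "j < t" "q i < t" using permutes_in_image[OF q, of i] by auto
    then show "?X\<^sup>T $$ (i, j) = mat t t (\<lambda>(i,j). S\<^sup>T $$ (q i, j)) $$ (i, j)"
      using S by simp
  qed simp_all
  have "det ?X = det (?X\<^sup>T)" using det_transpose[OF X] by simp
  also have "\<dots> = signof q * det (S\<^sup>T)"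
    unfolding XT by (rule det_permute_rows) (use S q in simp_all)
  also have "\<dots> = signof q * det S" using det_transpose[OF S] by simp
  finally have dX: "det ?X = signof q * det S" .
  have "mat t t (\<lambda>(r,c). S $$ (p r, q c)) = mat t t (\<lambda>(i,j). ?X $$ (p i, j))"
  proof (rule eq_matI)
    fix i j assume "i < dim_row (mat t t (\<lambda>(i,j). ?X $$ (p i, j)))"
      "j < dim_col (mat t t (\<lambda>(i,j). ?X $$ (p i, j)))"
    then have "i < t" "j < t" "p i < t" using permutes_in_image[OF p, of i] by auto
    then show "mat t t (\<lambda>(r,c). S $$ (p r, q c)) $$ (i, j) = mat t t (\<lambda>(i,j). ?X $$ (p i, j)) $$ (i, j)"
      by simp
  qed simp_all
  then show ?thesis using det_permute_rows[OF X p] dX by simp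
qed

lemma det_sel_mat_eq_0_if_not_inj:
  assumes "\<not> inj_on f {0..<t} \<or> \<not> inj_on h {0..<t}"
  shows "det (sel_mat t A f h) = 0"
  using assms
proof
  assume "\<not> inj_on f {0..<t}"
  then obtain i j where ij: "i \<noteq> j" "i < t" "j < t" "f i = f j" unfolding inj_on_def by auto
  then have "row (sel_mat t A f h) i = row (sel_mat t A f h) j" by (auto intro!: eq_vecI)
  then show ?thesis using det_identical_rows[OF sel_mat_carrier[of t A f h] ij(1-3)] by simp
next
  assume "\<not> inj_on h {0..<t}"
  then obtain i j where ij: "i \<noteq> j" "i < t" "j < t" "h i = h j" unfolding inj_on_def by auto
  then have "col (sel_mat t A f h) i = col (sel_mat t A f h) j" by (auto intro!: eq_vecI)
  then show ?thesis using det_identical_columns[OF sel_mat_carrier[of t A f h] ij(1-3)] by simp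
qed

lemma dvd_det_sel_mat:
  assumes mins: "dvd_minors g A t"
    and f: "\<And>r. r < t \<Longrightarrow> f r < dim_row A" and h: "\<And>c. c < t \<Longrightarrow> h c < dim_col A"
  shows "g dvd det (sel_mat t A f h)"
proof (cases "inj_on f {0..<t} \<and> inj_on h {0..<t}")
  case False
  then show ?thesis using det_sel_mat_eq_0_if_not_inj[of f t h A] by simp
next
  case True
  define I where "I = f ` {0..<t}"
  define J where "J = h ` {0..<t}"
  obtain p where p: "p permutes {0..<t}" "\<And>r. r < t \<Longrightarrow> pick I (p r) = f r"
    using permutes_rank_in_image[OF conjunct1[OF True] I_def] by blast
  obtain q where q: "q permutes {0..<t}" "\<And>r. r < t \<Longrightarrow> pick J (q r) = h r"
    using permutes_rank_in_image[OF conjunct2[OF True] J_def] by blast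
  have IJ: "I \<subseteq> {..<dim_row A}" "card I = t" "J \<subseteq> {..<dim_col A}" "card J = t"
    using f h True by (auto simp: I_def J_def card_image)
  let ?S = "submatrix A I J"
  have S: "?S = sel_mat t A (pick I) (pick J)" by (rule submatrix_eq_sel_mat[OF IJ])
  have "sel_mat t A f h = mat t t (\<lambda>(r,c). ?S $$ (p r, q c))"
  proof (rule eq_matI)
    fix i j assume "i < dim_row (mat t t (\<lambda>(r,c). ?S $$ (p r, q c)))"
      "j < dim_col (mat t t (\<lambda>(r,c). ?S $$ (p r, q c)))"
    then have ij: "i < t" "j < t" "p i < t" "q j < t"
      using permutes_in_image[OF p(1)] permutes_in_image[OF q(1)] by auto
    then show "sel_mat t A f h $$ (i, j) = mat t t (\<lambda>(r,c). ?S $$ (p r, q c)) $$ (i, j)"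
      unfolding S using p(2) q(2) by simp
  qed simp_all
  then have "det (sel_mat t A f h) = signof p * signof q * det ?S"
    using det_permute_rows_cols[OF _ p(1) q(1), of ?S] S by simp
  moreover have "g dvd det ?S" using mins IJ unfolding dvd_minors_def by blast
  ultimately show ?thesis by simp
qed

lemma dvd_minors_det_divisor: "dvd_minors (det_divisor A t) A t"
  unfolding dvd_minors_def det_divisor_def by (auto intro!: Gcd_dvd)

lemma dvd_det_divisor: "dvd_minors g A t \<Longrightarrow> 0 < t \<Longrightarrow> g dvd det_divisor A t"
  unfolding dvd_minors_def det_divisor_def by (auto intro!: Gcd_greatest)

lemma det_divisor_dvd_Suc: "det_divisor A s dvd det_divisor A (Suc s)"
proof (rule dvd_det_divisor)
  show "dvd_minors (det_divisor A s) A (Suc s)"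
    unfolding dvd_minors_def
  proof (intro allI impI)
    fix I J assume IJ: "I \<subseteq> {..<dim_row A}" "J \<subseteq> {..<dim_col A}" "card I = Suc s" "card J = Suc s"
    let ?X = "sel_mat (Suc s) A (pick I) (pick J)"
    have "det ?X = (\<Sum>j<Suc s. ?X $$ (0,j) * cofactor ?X 0 j)"
      by (rule laplace_expansion_row) auto
    also have "det_divisor A s dvd \<dots>"
    proof (rule dvd_sum)
      fix j assume j: "j \<in> {..<Suc s}"
      have "mat_delete ?X 0 j = sel_mat s A (\<lambda>r. pick I (Suc r)) (\<lambda>c. pick J (if c < j then c else Suc c))"
        using j by (auto intro!: eq_matI simp: mat_delete_def)
      moreover have "det_divisor A s dvd det \<dots>"
        by (rule dvd_det_sel_mat[OF dvd_minors_det_divisor]) (use pick_less[OF IJ(1,3)] pick_less[OF IJ(2,4)] in \<open>auto simp del: pick.simps\<close>)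
      ultimately show "det_divisor A s dvd ?X $$ (0,j) * cofactor ?X 0 j" unfolding cofactor_def by simp
    qed
    finally show "det_divisor A s dvd det (submatrix A I J)"
      using submatrix_eq_sel_mat IJ by metis
  qed
qed simp

lemma prod_inv_factor:
  assumes "\<And>i. 1 \<le> i \<Longrightarrow> i \<le> k \<Longrightarrow> det_divisor A i \<noteq> 0"
  shows "(\<Prod>i = 1..k. inv_factor A i) = det_divisor A k"
  using assms
proof (induction k)
  case 0
  then show ?case by (simp add: det_divisor_def)
next
  case (Suc k)
  then have "(\<Prod>i = 1..Suc k. inv_factor A i) = det_divisor A k * inv_factor A (Suc k)"
    by (simp add: prod.nat_ivl_Suc')
  also have "\<dots> = det_divisor A (Suc k)"
    unfolding inv_factor_def using det_divisor_dvd_Suc[of A k] by simp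
  finally show ?case .
qed

lemma dvd_det_mult_if_dvd_maximal_minors:
  assumes N: "N \<in> carrier_mat n k" and L: "L \<in> carrier_mat k n" and mins: "dvd_minors g N k"
  shows "g dvd det (L * N)"
proof -
  let ?F = "{f. (\<forall>i\<in>{0..<k}. f i \<in> {0..<n}) \<and> (\<forall>i. i \<notin> {0..<k} \<longrightarrow> f i = i)}"
  have "det (L * N) = (\<Sum>f\<in>?F. det (mat\<^sub>r k k (\<lambda>i. L $$ (i, f i) \<cdot>\<^sub>v row N (f i))))"
    unfolding mat_mul_finsum_alt[OF L N] by (rule det_linear_rows_sum) (use N in auto)
  also have "\<dots> = (\<Sum>f\<in>?F. prod (\<lambda>i. L $$ (i, f i)) {0..<k} * det (sel_mat k N f id))"
  proof (rule sum.cong[OF refl])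
    fix f assume f: "f \<in> ?F"
    have "mat\<^sub>r k k (\<lambda>i. row N (f i)) = sel_mat k N f id"
      using f N by (auto intro!: eq_matI)
    moreover have "det (mat\<^sub>r k k (\<lambda>i. L $$ (i, f i) \<cdot>\<^sub>v row N (f i))) =
        prod (\<lambda>i. L $$ (i, f i)) {0..<k} * det (mat\<^sub>r k k (\<lambda>i. row N (f i)))"
      by (rule det_rows_mul) (use N in auto)
    ultimately show "det (mat\<^sub>r k k (\<lambda>i. L $$ (i, f i) \<cdot>\<^sub>v row N (f i))) =
        prod (\<lambda>i. L $$ (i, f i)) {0..<k} * det (sel_mat k N f id)" by simp
  qed
  also have "g dvd \<dots>"
  proof (rule dvd_sum)
    fix f assume "f \<in> ?F"
    then have "g dvd det (sel_mat k N f id)"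
      by (intro dvd_det_sel_mat[OF mins]) (use N in auto)
    then show "g dvd prod (\<lambda>i. L $$ (i, f i)) {0..<k} * det (sel_mat k N f id)" by simp
  qed
  finally show ?thesis .
qed

definition sel_rows :: "nat \<Rightarrow> 'a mat \<Rightarrow> (nat \<Rightarrow> nat) \<Rightarrow> 'a mat" where
  "sel_rows t A f = mat t (dim_col A) (\<lambda>(r,l). A $$ (f r, l))"

lemma sel_rows_carrier: "sel_rows t A f \<in> carrier_mat t (dim_col A)"
  unfolding sel_rows_def by simp

lemma sel_mat_mult_left:
  assumes Q: "Q \<in> carrier_mat m n" and N: "N \<in> carrier_mat n k" and f: "\<And>r. r < k \<Longrightarrow> f r < m"
  shows "sel_mat k (Q * N) f id = sel_rows k Q f * N"
proof (rule eq_matI)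
  fix i j assume "i < dim_row (sel_rows k Q f * N)" "j < dim_col (sel_rows k Q f * N)"
  then have ij: "i < k" "j < k" using N by (auto simp: sel_rows_def)
  have "row (sel_rows k Q f) i = row Q (f i)"
    using ij Q f[OF ij(1)] by (auto simp: sel_rows_def intro!: eq_vecI)
  then show "sel_mat k (Q * N) f id $$ (i, j) = (sel_rows k Q f * N) $$ (i, j)"
    using ij f[OF ij(1)] Q N by (simp add: sel_rows_def)
qed (use N in \<open>auto simp: sel_rows_def\<close>)

lemma sel_mat_mult_right:
  assumes A: "A \<in> carrier_mat m k" and P: "P \<in> carrier_mat k k" and f: "\<And>r. r < k \<Longrightarrow> f r < m"
  shows "sel_mat k (A * P) f id = sel_mat k A f id * P"
proof (rule eq_matI)
  fix i j assume "i < dim_row (sel_mat k A f id * P)" "j < dim_col (sel_mat k A f id * P)"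
  then have ij: "i < k" "j < k" using P by auto
  have "row (sel_mat k A f id) i = row A (f i)"
    using ij A f[OF ij(1)] by (auto intro!: eq_vecI)
  then show "sel_mat k (A * P) f id $$ (i, j) = (sel_mat k A f id * P) $$ (i, j)"
    using ij f[OF ij(1)] A P by simp
qed (use P in auto)

lemma dvd_maximal_minors_mult:
  assumes N: "N \<in> carrier_mat n k" and Q: "Q \<in> carrier_mat m n" and P: "P \<in> carrier_mat k k"
    and mins: "dvd_minors g N k"
  shows "dvd_minors g (Q * N * P) k"
  unfolding dvd_minors_def
proof (intro allI impI)
  fix I J assume I: "I \<subseteq> {..<dim_row (Q * N * P)}" and J: "J \<subseteq> {..<dim_col (Q * N * P)}"
    and cI: "card I = k" and cJ: "card J = k"
  have QN: "Q * N \<in> carrier_mat m k" using Q N by simp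
  have pk: "\<And>r. r < k \<Longrightarrow> pick I r < m" using pick_less[OF _ cI] I Q by simp
  have "submatrix (Q * N * P) I J = sel_mat k (Q * N * P) (pick I) id"
    using submatrix_all_cols_eq_sel_mat[of I "Q * N * P" J] I J cI cJ P by simp
  also have "\<dots> = sel_rows k Q (pick I) * N * P"
    using sel_mat_mult_right[OF QN P pk] sel_mat_mult_left[OF Q N pk] by simp
  finally have "det (submatrix (Q * N * P) I J) = det (sel_rows k Q (pick I) * N) * det P"
    using det_mult[of "sel_rows k Q (pick I) * N" k P] sel_rows_carrier[of k Q "pick I"] Q N P by simp
  moreover have "g dvd det (sel_rows k Q (pick I) * N)"
    by (rule dvd_det_mult_if_dvd_maximal_minors[OF N _ mins]) (use sel_rows_carrier[of k Q "pick I"] Q in simp)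
  ultimately show "g dvd det (submatrix (Q * N * P) I J)" by simp
qed

lemma det_divisor_maximal_eq_if_equivalent:
  fixes A A' :: "'a::field_gcd poly mat"
  assumes A: "A \<in> carrier_mat n k" and A': "A' \<in> carrier_mat n k"
    and Q: "Q \<in> carrier_mat n n" and P: "P \<in> carrier_mat k k" and AA': "A = Q * A' * P"
    and Q': "Q' \<in> carrier_mat n n" and P': "P' \<in> carrier_mat k k" and A'A: "A' = Q' * A * P'"
  shows "det_divisor A k = det_divisor A' k"
proof (cases "k = 0")
  case False
  have "det_divisor A k dvd det_divisor A' k"
    using dvd_maximal_minors_mult[OF A Q' P' dvd_minors_det_divisor] False
    unfolding A'A[symmetric] by (intro dvd_det_divisor) simp_all
  moreover have "det_divisor A' k dvd det_divisor A k"
    using dvd_maximal_minors_mult[OF A' Q P dvd_minors_det_divisor] False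
    unfolding AA'[symmetric] by (intro dvd_det_divisor) simp_all
  ultimately show ?thesis
    by (rule associated_eqI) (simp_all add: det_divisor_def False)
qed (simp add: det_divisor_def)

section \<open>The characteristic matrix of a block triangular matrix\<close>

lemma charmat_carrier [simp]: "charmat B \<in> carrier_mat (dim_row B) (dim_col B)"
  unfolding charmat_def by simp

lemma charmat_dim [simp]: "dim_row (charmat B) = dim_row B" "dim_col (charmat B) = dim_col B"
  unfolding charmat_def by simp_all

lemma charmat_index [simp]: "i < dim_row B \<Longrightarrow> j < dim_col B \<Longrightarrow>
   charmat B $$ (i,j) = (if i = j then [:0, 1:] else 0) - [: B $$ (i,j) :]"
  unfolding charmat_def by simp

definition upper_left :: "nat \<Rightarrow> 'a mat \<Rightarrow> 'a mat" where
  "upper_left m A = mat m m (\<lambda>(i,j). A $$ (i,j))"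

definition lower_right :: "nat \<Rightarrow> 'a mat \<Rightarrow> 'a mat" where
  "lower_right m A = mat (dim_row A - m) (dim_col A - m) (\<lambda>(i,j). A $$ (m + i, m + j))"

lemma upper_left_charmat:
  "m \<le> dim_row B \<Longrightarrow> m \<le> dim_col B \<Longrightarrow> upper_left m (charmat B) = char_poly_matrix (upper_left m B)"
  by (rule eq_matI) (auto simp: upper_left_def char_poly_matrix_def)

lemma lower_right_charmat: "lower_right m (charmat B) = charmat (lower_right m B)"
  by (rule eq_matI) (auto simp: lower_right_def)

lemma det_divisor_charmat_nonzero:
  fixes B :: "'a::field_gcd mat"
  assumes B: "B \<in> carrier_mat n k" and kn: "k \<le> n" and i: "1 \<le> i" "i \<le> k"
  shows "det_divisor (charmat B) i \<noteq> 0"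
proof
  assume "det_divisor (charmat B) i = 0"
  moreover have "{..<i} \<subseteq> {..<dim_row (charmat B)}" "{..<i} \<subseteq> {..<dim_col (charmat B)}"
    using B kn i by auto
  ultimately have "det (submatrix (charmat B) {..<i} {..<i}) = 0"
    using dvd_minors_det_divisor[of "charmat B" i] unfolding dvd_minors_def
    by (metis card_lessThan dvd_0_left_iff)
  moreover have "submatrix (charmat B) {..<i} {..<i} = upper_left i (charmat B)"
    using submatrix_eq_sel_mat[where I="{..<i}" and J="{..<i}" and A="charmat B" and t=i] B kn i
    by (auto intro!: eq_matI simp: upper_left_def pick_lessThan)
  ultimately have "char_poly (upper_left i B) = 0"
    using B kn i by (simp add: upper_left_charmat char_poly_def)
  then show False
    using degree_monic_char_poly[of "upper_left i B" i] by (simp add: upper_left_def)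
qed

definition unit_lead_cols :: "nat \<Rightarrow> 'a::comm_ring_1 mat \<Rightarrow> 'a mat" where
  "unit_lead_cols m A = mat (dim_row A) (dim_col A)
     (\<lambda>(i,j). if j < m then (if i = j then 1 else 0) else A $$ (i,j))"

definition lead_block_diag :: "nat \<Rightarrow> 'a::comm_ring_1 mat \<Rightarrow> 'a mat" where
  "lead_block_diag m A = mat (dim_col A) (dim_col A)
     (\<lambda>(i,j). if i < m \<and> j < m then A $$ (i,j) else if i = j then 1 else 0)"

lemma block_triangular_factor:
  assumes A: "A \<in> carrier_mat n k" and mk: "m \<le> k" "k \<le> n"
    and zero: "\<And>i j. j < m \<Longrightarrow> m \<le> i \<Longrightarrow> i < n \<Longrightarrow> A $$ (i,j) = 0"
  shows "A = unit_lead_cols m A * lead_block_diag m A"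
proof (rule eq_matI)
  let ?K = "unit_lead_cols m A" and ?D = "lead_block_diag m A"
  fix i j assume "i < dim_row (?K * ?D)" "j < dim_col (?K * ?D)"
  then have ij: "i < n" "j < k" using A by (auto simp: unit_lead_cols_def lead_block_diag_def)
  have "(?K * ?D) $$ (i,j) = (\<Sum>l\<in>{0..<k}. ?K $$ (i,l) * ?D $$ (l,j))"
    using ij A by (simp add: unit_lead_cols_def lead_block_diag_def scalar_prod_def)
  also have "\<dots> = (\<Sum>l\<in>{0..<k}. if l = (if j < m then i else j) then A $$ (i,j) else 0)"
  proof (rule sum.cong[OF refl])
    fix l assume l: "l \<in> {0..<k}"
    show "?K $$ (i,l) * ?D $$ (l,j) = (if l = (if j < m then i else j) then A $$ (i,j) else 0)"
      using l ij A zero[of j i] zero[of j l] mk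
      by (cases "j < m") (auto simp: unit_lead_cols_def lead_block_diag_def)
  qed
  also have "\<dots> = A $$ (i,j)"
    using ij zero[of j i] mk by (cases "j < m"; cases "i < k") (auto simp: sum.delta')
  finally show "A $$ (i,j) = (?K * ?D) $$ (i,j)" by simp
qed (use A in \<open>auto simp: unit_lead_cols_def lead_block_diag_def\<close>)

lemma det_lead_block_diag:
  fixes A :: "'a::idom mat"
  assumes A: "A \<in> carrier_mat n k" and mk: "m \<le> k"
  shows "det (lead_block_diag m A) = det (upper_left m A)"
proof -
  have "lead_block_diag m A = four_block_mat (upper_left m A) (0\<^sub>m m (k-m)) (0\<^sub>m (k-m) m) (1\<^sub>m (k-m))"
    by (rule eq_matI) (use A mk in \<open>auto simp: lead_block_diag_def upper_left_def\<close>)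
  then show ?thesis
    by (simp add: det_four_block_mat_upper_right_zero[of _ m _ "k-m"] upper_left_def)
qed

lemma det_sel_mat_unit_lead_cols:
  fixes A :: "'a::idom mat"
  assumes A: "A \<in> carrier_mat n k" and mk: "m \<le> k" "k \<le> n"
    and f: "\<And>r. r < k - m \<Longrightarrow> f r < n - m"
  shows "det (sel_mat k (unit_lead_cols m A) (\<lambda>r. if r < m then r else m + f (r - m)) id)
       = det (sel_mat (k-m) (lower_right m A) f id)"
proof -
  let ?Z = "mat m (k-m) (\<lambda>(i,j). A $$ (i, m+j))"
  let ?S = "sel_mat (k-m) (lower_right m A) f id"
  have "sel_mat k (unit_lead_cols m A) (\<lambda>r. if r < m then r else m + f (r - m)) id
      = four_block_mat (1\<^sub>m m) ?Z (0\<^sub>m (k-m) m) ?S"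
  proof (rule eq_matI)
    fix i j assume "i < dim_row (four_block_mat (1\<^sub>m m) ?Z (0\<^sub>m (k-m) m) ?S)"
      "j < dim_col (four_block_mat (1\<^sub>m m) ?Z (0\<^sub>m (k-m) m) ?S)"
    then have ij: "i < k" "j < k" using mk by auto
    show "sel_mat k (unit_lead_cols m A) (\<lambda>r. if r < m then r else m + f (r - m)) id $$ (i, j) =
          four_block_mat (1\<^sub>m m) ?Z (0\<^sub>m (k-m) m) ?S $$ (i, j)"
    proof (cases "i < m")
      case True
      then show ?thesis using ij A mk by (auto simp: unit_lead_cols_def)
    next
      case False
      then have "f (i - m) < n - m" using f[of "i-m"] ij by auto
      then show ?thesis using ij A mk False by (auto simp: unit_lead_cols_def lower_right_def)
    qed
  qed (use mk in auto)
  then show ?thesis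
    by (simp add: det_four_block_mat_lower_left_zero[of _ m _ "k-m"])
qed

lemma det_sel_mat_charmat_block_triangular:
  fixes B :: "'a::field mat"
  assumes B: "B \<in> carrier_mat n k" and mk: "m \<le> k" "k \<le> n"
    and zero: "\<And>i j. j < m \<Longrightarrow> m \<le> i \<Longrightarrow> i < n \<Longrightarrow> B $$ (i,j) = 0"
    and f: "\<And>r. r < k \<Longrightarrow> f r < n"
  shows "det (sel_mat k (charmat B) f id)
       = det (sel_mat k (unit_lead_cols m (charmat B)) f id) * char_poly (upper_left m B)"
proof -
  let ?M = "charmat B"
  let ?K = "unit_lead_cols m ?M" and ?D = "lead_block_diag m ?M"
  have M: "?M \<in> carrier_mat n k" using B by (metis charmat_carrier carrier_matD)
  have K: "?K \<in> carrier_mat n k" using B by (simp add: unit_lead_cols_def)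
  have D: "?D \<in> carrier_mat k k" using B by (simp add: lead_block_diag_def)
  have "?M = ?K * ?D" by (rule block_triangular_factor[OF M mk]) (use zero B mk in auto)
  moreover have "det ?D = char_poly (upper_left m B)"
    using B mk by (simp add: det_lead_block_diag[OF M mk(1)] upper_left_charmat char_poly_def)
  ultimately show ?thesis
    using sel_mat_mult_right[OF K D f] det_mult[OF sel_mat_carrier D] by simp
qed

lemma char_poly_dvd_det_divisor_charmat:
  fixes B :: "'a::field_gcd mat"
  assumes B: "B \<in> carrier_mat n k" and mk: "m \<le> k" "k \<le> n" "0 < k"
    and zero: "\<And>i j. j < m \<Longrightarrow> m \<le> i \<Longrightarrow> i < n \<Longrightarrow> B $$ (i,j) = 0"
  shows "char_poly (upper_left m B) dvd det_divisor (charmat B) k"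
proof (rule dvd_det_divisor)
  show "dvd_minors (char_poly (upper_left m B)) (charmat B) k"
    unfolding dvd_minors_def
  proof (intro allI impI)
    fix I J assume IJ: "I \<subseteq> {..<dim_row (charmat B)}" "J \<subseteq> {..<dim_col (charmat B)}"
      "card I = k" "card J = k"
    then have "submatrix (charmat B) I J = sel_mat k (charmat B) (pick I) id"
      using submatrix_all_cols_eq_sel_mat[of I "charmat B" J] B by simp
    then show "char_poly (upper_left m B) dvd det (submatrix (charmat B) I J)"
      using det_sel_mat_charmat_block_triangular[OF B mk(1,2) zero, of "pick I"] pick_less[OF IJ(1,3)] B
      by simp
  qed
qed (rule mk(3))

lemma det_divisor_charmat_div_char_poly_dvd:
  fixes B :: "'a::field_gcd mat"
  assumes B: "B \<in> carrier_mat n k" and mk: "m \<le> k" "k \<le> n" "0 < k"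
    and zero: "\<And>i j. j < m \<Longrightarrow> m \<le> i \<Longrightarrow> i < n \<Longrightarrow> B $$ (i,j) = 0"
    and f: "\<And>r. r < k - m \<Longrightarrow> f r < n - m"
  shows "det_divisor (charmat B) k div char_poly (upper_left m B)
           dvd det (sel_mat (k-m) (charmat (lower_right m B)) f id)"
proof -
  let ?M = "charmat B" and ?K = "unit_lead_cols m (charmat B)"
  define \<chi> where "\<chi> = char_poly (upper_left m B)"
  define \<delta> where "\<delta> = det_divisor ?M k"
  obtain p where dp: "\<delta> = \<chi> * p"
    using char_poly_dvd_det_divisor_charmat[OF B mk zero] unfolding \<chi>_def \<delta>_def by (rule dvdE)
  have "\<chi> \<noteq> 0"
    using degree_monic_char_poly[of "upper_left m B" m] by (auto simp: \<chi>_def upper_left_def)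
  let ?F = "\<lambda>r. if r < m then r else m + f (r - m)"
  have F: "?F r < n" if "r < k" for r
  proof (cases "r < m")
    case False
    then have "f (r - m) < n - m" using that by (intro f) simp
    then show ?thesis using False mk by simp
  qed (use that mk in simp)
  have "\<delta> dvd det (sel_mat k ?M ?F id)"
    unfolding \<delta>_def by (rule dvd_det_sel_mat[OF dvd_minors_det_divisor]) (use F B in auto)
  then have "\<chi> * p dvd \<chi> * det (sel_mat k ?K ?F id)"
    using det_sel_mat_charmat_block_triangular[OF B mk(1,2) zero F] dp by (simp add: ac_simps \<chi>_def)
  moreover have "?M \<in> carrier_mat n k" using B by (metis charmat_carrier carrier_matD)
  ultimately have "p dvd det (sel_mat (k-m) (lower_right m ?M) f id)"
    using \<open>\<chi> \<noteq> 0\<close> det_sel_mat_unit_lead_cols[of ?M n k m f] f mk by simp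
  then show ?thesis using dp \<open>\<chi> \<noteq> 0\<close> by (simp add: lower_right_charmat \<delta>_def \<chi>_def)
qed

section \<open>Cramer's rule modulo a polynomial\<close>

definition bordered_cofactors :: "nat \<Rightarrow> 'a::comm_ring_1 mat \<Rightarrow> (nat \<Rightarrow> nat) \<Rightarrow> 'a vec" where
  "bordered_cofactors u N f =
     vec (Suc u) (cofactor (sel_mat (Suc u) N (\<lambda>r. if r < u then f r else 0) id) u)"

lemma mat_delete_sel_mat_last_row:
  "c < Suc u \<Longrightarrow> mat_delete (sel_mat (Suc u) N (\<lambda>r. if r < u then f r else i) id) u c
     = sel_mat u N f (\<lambda>c'. if c' < c then c' else Suc c')"
  by (rule eq_matI) (auto simp: mat_delete_def)

lemma bordered_cofactors_last: "bordered_cofactors u N f $ u = det (sel_mat u N f id)"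
proof -
  have "sel_mat u N f (\<lambda>c'. if c' < u then c' else Suc c') = sel_mat u N f id"
    by (intro eq_matI) auto
  moreover have "bordered_cofactors u N f $ u
      = cofactor (sel_mat (Suc u) N (\<lambda>r. if r < u then f r else 0) id) u u"
    by (simp add: bordered_cofactors_def)
  ultimately show ?thesis
    unfolding cofactor_def mat_delete_sel_mat_last_row[OF lessI] by simp
qed

lemma mult_bordered_cofactors:
  assumes N: "N \<in> carrier_mat s (Suc u)" and i: "i < s"
  shows "(N *\<^sub>v bordered_cofactors u N f) $ i = det (sel_mat (Suc u) N (\<lambda>r. if r < u then f r else i) id)"
proof -
  let ?X = "sel_mat (Suc u) N (\<lambda>r. if r < u then f r else i) id"
  have cof: "bordered_cofactors u N f $ c = cofactor ?X u c" if "c < Suc u" for c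
    unfolding bordered_cofactors_def cofactor_def using that
    by (simp only: index_vec mat_delete_sel_mat_last_row)
  have "(N *\<^sub>v bordered_cofactors u N f) $ i = (\<Sum>c<Suc u. N $$ (i,c) * bordered_cofactors u N f $ c)"
    using i N by (simp add: scalar_prod_def bordered_cofactors_def atLeast0LessThan)
  also have "\<dots> = (\<Sum>c<Suc u. ?X $$ (u,c) * cofactor ?X u c)"
    by (rule sum.cong) (simp_all add: cof)
  also have "\<dots> = det ?X"
    by (rule laplace_expansion_row[symmetric]) auto
  finally show ?thesis .
qed

text \<open>Cramer's rule modulo \<open>p\<close>, by induction on the number of columns: either the first
  \<open>u\<close> columns already have all maximal minors divisible by \<open>p\<close>, or some such minor is not, and
  then the cofactors of the minors bordered by one more row give the solution.\<close>
lemma exists_vec_mult_dvd_if_dvd_maximal_minors: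
  fixes N :: "'a::comm_ring_1 mat"
  assumes N: "N \<in> carrier_mat s t" and np: "\<not> p dvd 1"
    and mins: "\<And>f. (\<And>r. r < t \<Longrightarrow> f r < s) \<Longrightarrow> p dvd det (sel_mat t N f id)"
  shows "\<exists>v \<in> carrier_vec t. (\<exists>j<t. \<not> p dvd v $ j) \<and> (\<forall>i<s. p dvd (N *\<^sub>v v) $ i)"
  using N mins
proof (induction t arbitrary: N)
  case 0
  have "p dvd det (sel_mat 0 N id id)" by (rule 0(2)) auto
  moreover have "det (sel_mat 0 N id id) = 1" by (rule det_dim_zero) simp
  ultimately show ?case using np by simp
next
  case (Suc u)
  let ?N' = "mat s u (\<lambda>(i,j). N $$ (i,j))"
  have sel_N': "sel_mat u ?N' f id = sel_mat u N f id" if "\<And>r. r < u \<Longrightarrow> f r < s" for f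
    using that by (intro eq_matI) auto
  show ?case
  proof (cases "\<forall>f. (\<forall>r<u. f r < s) \<longrightarrow> p dvd det (sel_mat u ?N' f id)")
    case True
    moreover have "?N' \<in> carrier_mat s u" by simp
    ultimately obtain v' where v': "v' \<in> carrier_vec u" "\<exists>j<u. \<not> p dvd v' $ j" "\<forall>i<s. p dvd (?N' *\<^sub>v v') $ i"
      using Suc.IH by blast
    define v where "v = vec (Suc u) (\<lambda>j. if j < u then v' $ j else 0)"
    have "(N *\<^sub>v v) $ i = (?N' *\<^sub>v v') $ i" if i: "i < s" for i
      using i Suc.prems(1) v' by (simp add: scalar_prod_def v_def)
    moreover have "\<exists>j<Suc u. \<not> p dvd v $ j"
    proof -
      obtain j where "j < u" "\<not> p dvd v' $ j" using v'(2) by blast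
      then show ?thesis by (intro exI[of _ j]) (simp add: v_def)
    qed
    ultimately show ?thesis using v'(3) by (intro bexI[of _ v]) (auto simp: v_def)
  next
    case False
    then obtain f where f: "\<And>r. r < u \<Longrightarrow> f r < s" and "\<not> p dvd det (sel_mat u ?N' f id)"
      by blast
    then have nd: "\<not> p dvd det (sel_mat u N f id)" using sel_N' by simp
    let ?v = "bordered_cofactors u N f"
    have "p dvd (N *\<^sub>v ?v) $ i" if i: "i < s" for i
      unfolding mult_bordered_cofactors[OF Suc.prems(1) i]
      by (rule Suc.prems(2)) (use f i in auto)
    moreover have "\<not> p dvd ?v $ u" using nd by (simp add: bordered_cofactors_last)
    ultimately show ?thesis by (intro bexI[of _ ?v]) (auto simp: bordered_cofactors_def)
  qed
qed

lemma exists_low_degree_solution_mod: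
  fixes N :: "'a::field poly mat" and p :: "'a poly"
  assumes N: "N \<in> carrier_mat s t" and degp: "0 < degree p"
    and mins: "\<And>f. (\<And>r. r < t \<Longrightarrow> f r < s) \<Longrightarrow> p dvd det (sel_mat t N f id)"
  obtains w where "\<And>j. j < t \<Longrightarrow> degree (w j) < degree p" and "\<exists>j<t. w j \<noteq> 0"
    and "\<And>r. r < s \<Longrightarrow> p dvd (\<Sum>j<t. N $$ (r,j) * w j)"
proof -
  have p: "p \<noteq> 0" using degp by auto
  have "\<not> p dvd 1" using degp is_unit_iff_degree[OF p] by auto
  then obtain v where v: "v \<in> carrier_vec t" and vnz: "\<exists>j<t. \<not> p dvd v $ j"
    and vdvd: "\<forall>r<s. p dvd (N *\<^sub>v v) $ r"
    using exists_vec_mult_dvd_if_dvd_maximal_minors[OF N _ mins] by blast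
  define w where "w j = v $ j mod p" for j
  have "degree (w j) < degree p" for j
    using degree_mod_less'[OF p, of "v $ j"] degp by (cases "w j = 0") (auto simp: w_def)
  moreover have "\<exists>j<t. w j \<noteq> 0" using vnz by (auto simp: w_def dvd_eq_mod_eq_0)
  moreover have "p dvd (\<Sum>j<t. N $$ (r,j) * w j)" if r: "r < s" for r
  proof -
    have "(N *\<^sub>v v) $ r = (\<Sum>j<t. N $$ (r,j) * v $ j)"
      using r v N by (simp add: scalar_prod_def atLeast0LessThan)
    also have "\<dots> = (\<Sum>j<t. N $$ (r,j) * (p * (v $ j div p) + w j))"
      unfolding w_def by simp
    also have "\<dots> = p * (\<Sum>j<t. N $$ (r,j) * (v $ j div p)) + (\<Sum>j<t. N $$ (r,j) * w j)"
      by (simp add: distrib_left sum.distrib sum_distrib_left mult.left_commute)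
    finally have eq: "(N *\<^sub>v v) $ r = p * (\<Sum>j<t. N $$ (r,j) * (v $ j div p)) + (\<Sum>j<t. N $$ (r,j) * w j)" .
    have "p dvd (N *\<^sub>v v) $ r" using vdvd r by blast
    then show ?thesis unfolding eq by (simp add: dvd_add_right_iff)
  qed
  ultimately show thesis using that by blast
qed

section \<open>Coordinates with respect to a basis list\<close>

lemma sum_const_poly: "(\<Sum>i\<in>I. [:f i:]) = [:\<Sum>i\<in>I. f i:]"
  by (induction I rule: infinite_finite_induct) auto

lemma sum_const_mult_char_entry:
  fixes q b :: "nat \<Rightarrow> 'a::field"
  shows "(\<Sum>r\<in>{0..<n}. [:q r:] * ((if r = l then [:0,1:] else 0) - [:b r:]))
       = smult (if l < n then q l else 0) [:0,1:] - [:\<Sum>r<n. q r * b r:]"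
proof -
  have eq: "[:q r:] * ((if r = l then [:0,1:] else 0) - [:b r:])
      = (if r = l then smult (q r) [:0,1:] else 0) - [:q r * b r:]" for r
    by (simp add: right_diff_distrib mult_to_poly)
  show ?thesis
    unfolding eq sum_subtractf by (simp add: sum.delta' sum_const_poly atLeast0LessThan)
qed

lemma sum_linear_mult_const:
  fixes q b p :: "nat \<Rightarrow> 'a::field"
  shows "(\<Sum>l\<in>{0..<k}. (smult (q l) [:0,1:] - [:b l:]) * [:p l:])
       = smult (\<Sum>l<k. q l * p l) [:0,1:] - [:\<Sum>l<k. b l * p l:]"
proof -
  have eq: "(smult (q l) [:0,1:] - [:b l:]) * [:p l:] = smult (q l * p l) [:0,1:] - [:b l * p l:]" for l
    by (simp add: left_diff_distrib mult_to_poly mult.commute)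
  show ?thesis unfolding eq sum_subtractf atLeast0LessThan sum_const_poly smult_sum ..
qed

lemma charmat_change_of_coordinates:
  fixes B B' :: "'a::field mat"
  assumes B: "B \<in> carrier_mat n k" and B': "B' \<in> carrier_mat n k"
    and Q0: "Q0 \<in> carrier_mat n n" and P0: "P0 \<in> carrier_mat k k" and kn: "k \<le> n"
    and eqB: "\<And>i j. i < n \<Longrightarrow> j < k \<Longrightarrow> B $$ (i,j) = (\<Sum>l<k. \<Sum>r<n. Q0 $$ (i,r) * B' $$ (r,l) * P0 $$ (l,j))"
    and eqJ: "\<And>i j. i < n \<Longrightarrow> j < k \<Longrightarrow> (\<Sum>l<k. Q0 $$ (i,l) * P0 $$ (l,j)) = (if i = j then 1 else 0)"
  shows "charmat B = map_mat (\<lambda>a. [:a:]) Q0 * charmat B' * map_mat (\<lambda>a. [:a:]) P0"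
proof (rule eq_matI)
  let ?Q = "map_mat (\<lambda>a. [:a:]) Q0" and ?P = "map_mat (\<lambda>a. [:a:]) P0"
  fix i j assume "i < dim_row (?Q * charmat B' * ?P)" "j < dim_col (?Q * charmat B' * ?P)"
  then have ij: "i < n" "j < k" using Q0 P0 by auto
  have QM: "(?Q * charmat B') $$ (i,l) = smult (Q0 $$ (i,l)) [:0,1:] - [:\<Sum>r<n. Q0 $$ (i,r) * B' $$ (r,l):]"
    if l: "l < k" for l
  proof -
    have "(?Q * charmat B') $$ (i,l) = (\<Sum>r\<in>{0..<n}. [:Q0 $$ (i,r):] * ((if r = l then [:0,1:] else 0) - [:B' $$ (r,l):]))"
      using ij l Q0 B' by (simp add: scalar_prod_def)
    also have "\<dots> = smult (if l < n then Q0 $$ (i,l) else 0) [:0,1:] - [:\<Sum>r<n. Q0 $$ (i,r) * B' $$ (r,l):]"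
      by (rule sum_const_mult_char_entry)
    finally show ?thesis using l kn by simp
  qed
  have "(?Q * charmat B' * ?P) $$ (i,j) = (\<Sum>l\<in>{0..<k}. (?Q * charmat B') $$ (i,l) * [:P0 $$ (l,j):])"
    using ij Q0 P0 B' by (simp add: scalar_prod_def)
  also have "\<dots> = (\<Sum>l\<in>{0..<k}. (smult (Q0 $$ (i,l)) [:0,1:] - [:\<Sum>r<n. Q0 $$ (i,r) * B' $$ (r,l):]) * [:P0 $$ (l,j):])"
    by (rule sum.cong[OF refl]) (simp add: QM)
  also have "\<dots> = smult (\<Sum>l<k. Q0 $$ (i,l) * P0 $$ (l,j)) [:0,1:] - [:\<Sum>l<k. (\<Sum>r<n. Q0 $$ (i,r) * B' $$ (r,l)) * P0 $$ (l,j):]"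
    by (rule sum_linear_mult_const)
  also have "\<dots> = (if i = j then [:0,1:] else 0) - [:B $$ (i,j):]"
    using eqJ[OF ij] eqB[OF ij] by (simp add: sum_distrib_right)
  also have "\<dots> = charmat B $$ (i,j)" using ij B by simp
  finally show "charmat B $$ (i,j) = (?Q * charmat B' * ?P) $$ (i,j)" by simp
qed (use B Q0 P0 in auto)

context vector_space
begin

lemma sum_nth_representation:
  assumes d: "distinct bs" and ind: "independent (set bs)" and x: "x \<in> span (set bs)"
  shows "(\<Sum>i<length bs. scale (representation (set bs) x (bs!i)) (bs!i)) = x"
proof -
  have "set bs = (!) bs ` {..<length bs}" "inj_on ((!) bs) {..<length bs}"
    using d by (auto simp: in_set_conv_nth inj_on_def nth_eq_iff_index_eq)
  then have "(\<Sum>i<length bs. scale (representation (set bs) x (bs!i)) (bs!i))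
      = (\<Sum>b\<in>set bs. scale (representation (set bs) x b) b)"
    by (simp add: sum.reindex)
  also have "\<dots> = x" by (rule sum_representation_eq) (use ind x in auto)
  finally show ?thesis .
qed

lemma sum_take_representation:
  assumes d: "distinct L" and ind: "independent (set L)" and kn: "k \<le> length L"
    and x: "x \<in> span (set (take k L))"
  shows "(\<Sum>l<k. scale (representation (set L) x (L!l)) (L!l)) = x"
proof -
  have S: "set (take k L) \<subseteq> set L" by (rule set_take_subset)
  have "independent (set (take k L))" using ind S by (rule independent_mono)
  then have "(\<Sum>l<length (take k L). scale (representation (set (take k L)) x (take k L!l)) (take k L!l)) = x"
    using d x by (intro sum_nth_representation) simp_all
  moreover have "representation (set L) x = representation (set (take k L)) x"
    by (rule representation_extend[OF ind x S])
  ultimately show ?thesis using kn by simp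
qed

lemma representation_sum_scale:
  assumes "independent basis" "\<And>i. i \<in> I \<Longrightarrow> x i \<in> span basis"
  shows "representation basis (\<Sum>i\<in>I. scale (c i) (x i)) b = (\<Sum>i\<in>I. c i * representation basis (x i) b)"
  using representation_sum[of basis I "\<lambda>i. scale (c i) (x i)"] representation_scale assms
  by (simp add: span_scale)

lemma representation_nth_nth:
  assumes "distinct L" "independent (set L)" "i < length L" "j < length L"
  shows "representation (set L) (L!j) (L!i) = (if i = j then 1 else 0)"
  using representation_basis[of "set L" "L!j"] assms by (simp add: nth_eq_iff_index_eq)

lemma representation_eq_0_outside:
  assumes "independent B" "S \<subseteq> B" "x \<in> span S" "b \<notin> S"
  shows "representation B x b = 0"
  using representation_extend[of B x S] representation_ne_zero[of S x b] assms by auto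

lemma additive_on_zero:
  fixes T :: "'b \<Rightarrow> 'b"
  assumes "subspace W" and add: "\<forall>x\<in>W. \<forall>y\<in>W. T (x + y) = T x + T y"
  shows "T 0 = 0"
proof -
  have "T 0 + 0 = T (0 + 0)" by simp
  also have "\<dots> = T 0 + T 0" using add subspace_0[OF assms(1)] by blast
  finally have "0 = T 0" by (rule add_left_imp_eq)
  then show ?thesis by simp
qed

lemma linear_on_sum:
  fixes T :: "'b \<Rightarrow> 'b"
  assumes W: "subspace W" and add: "\<forall>x\<in>W. \<forall>y\<in>W. T (x + y) = T x + T y"
    and sc: "\<forall>c. \<forall>x\<in>W. T (scale c x) = scale c (T x)"
    and fin: "finite I" and xW: "\<And>i. i \<in> I \<Longrightarrow> x i \<in> W"
  shows "T (\<Sum>i\<in>I. scale (c i) (x i)) = (\<Sum>i\<in>I. scale (c i) (T (x i)))"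
  using fin xW
proof (induction I rule: finite_induct)
  case empty
  then show ?case using additive_on_zero[OF W add] by simp
next
  case (insert a F)
  have "scale (c a) (x a) \<in> W" "(\<Sum>i\<in>F. scale (c i) (x i)) \<in> W"
    using insert W by (auto intro: subspace_scale subspace_sum)
  then show ?case using insert add sc by simp
qed

lemma span_invariant_if_generators_invariant:
  fixes T :: "'b \<Rightarrow> 'b"
  assumes W: "subspace W" and add: "\<forall>x\<in>W. \<forall>y\<in>W. T (x + y) = T x + T y"
    and sc: "\<forall>c. \<forall>x\<in>W. T (scale c x) = scale c (T x)"
    and SW: "S \<subseteq> W" and TS: "\<And>s. s \<in> S \<Longrightarrow> T s \<in> span S"
  shows "span S \<subseteq> W" "T ` span S \<subseteq> span S"
proof -
  have "x \<in> W \<and> T x \<in> span S" if "x \<in> span S" for x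
    using that
  proof (induction rule: span_induct_alt)
    case base
    then show ?case using additive_on_zero[OF W add] W span_zero by (simp add: subspace_0)
  next
    case (step c x y)
    have xW: "x \<in> W" using step SW by auto
    then have cx: "scale c x \<in> W" using W by (rule subspace_scale[rotated])
    then have "T (scale c x + y) = T (scale c x) + T y" using add step by blast
    also have "\<dots> = scale c (T x) + T y" using sc xW by simp
    finally have "T (scale c x + y) = scale c (T x) + T y" .
    moreover have "scale c (T x) + T y \<in> span S"
      using TS[OF step(1)] step(2) by (intro span_add span_scale) auto
    moreover have "scale c x + y \<in> W" using cx step(2) W by (simp add: subspace_add)
    ultimately show ?case by simp
  qed
  then show "span S \<subseteq> W" "T ` span S \<subseteq> span S" by auto
qed

text \<open>The span of all \<open>T\<close>-invariant subspaces of \<open>W\<close> is again one, so \<open>GREATEST\<close> is well defined.\<close>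
lemma max_inv_subspace:
  fixes T :: "'b \<Rightarrow> 'b"
  assumes W: "subspace W" and add: "\<forall>x\<in>W. \<forall>y\<in>W. T (x + y) = T x + T y"
    and sc: "\<forall>c. \<forall>x\<in>W. T (scale c x) = scale c (T x)"
  shows "subspace (max_inv_subspace scale W T)" "max_inv_subspace scale W T \<subseteq> W"
    "T ` max_inv_subspace scale W T \<subseteq> max_inv_subspace scale W T"
    "\<And>U. subspace U \<Longrightarrow> U \<subseteq> W \<Longrightarrow> T ` U \<subseteq> U \<Longrightarrow> U \<subseteq> max_inv_subspace scale W T"
proof -
  define Inv where "Inv U \<longleftrightarrow> subspace U \<and> U \<subseteq> W \<and> T ` U \<subseteq> U" for U
  define G where "G = span (\<Union>{U. Inv U})"
  have sub: "\<Union>{U. Inv U} \<subseteq> W" unfolding Inv_def by auto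
  have gen: "T s \<in> span (\<Union>{U. Inv U})" if "s \<in> \<Union>{U. Inv U}" for s
  proof -
    from that obtain U where "Inv U" "s \<in> U" by blast
    then have "T s \<in> \<Union>{U. Inv U}" unfolding Inv_def by auto
    then show ?thesis by (rule span_base)
  qed
  have "Inv G"
    using span_invariant_if_generators_invariant[OF W add sc sub gen] unfolding Inv_def G_def by simp
  moreover have maxG: "U \<subseteq> G" if "Inv U" for U
    using that unfolding G_def by (auto intro: span_base)
  ultimately have "max_inv_subspace scale W T = G"
    unfolding max_inv_subspace_def Inv_def[symmetric] by (intro Greatest_equality) auto
  then show "subspace (max_inv_subspace scale W T)" "max_inv_subspace scale W T \<subseteq> W"
    "T ` max_inv_subspace scale W T \<subseteq> max_inv_subspace scale W T"
    "\<And>U. subspace U \<Longrightarrow> U \<subseteq> W \<Longrightarrow> T ` U \<subseteq> U \<Longrightarrow> U \<subseteq> max_inv_subspace scale W T"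
    using \<open>Inv G\<close> maxG unfolding Inv_def by auto
qed

end

lemma matrix_of_map_carrier: "matrix_of_map scale L k T \<in> carrier_mat (length L) k"
  unfolding matrix_of_map_def by simp

lemma charmat_matrix_of_map_carrier: "charmat (matrix_of_map scale L k T) \<in> carrier_mat (length L) k"
  unfolding charmat_def matrix_of_map_def by simp

context vector_space
begin

lemma matrix_of_map_index:
  "i < length L \<Longrightarrow> j < k \<Longrightarrow> matrix_of_map scale L k T $$ (i,j) = representation (set L) (T (L!j)) (L!i)"
  unfolding matrix_of_map_def by simp

lemma change_basis_mult_eq_id:
  assumes d1: "distinct L1" and i1: "independent (set L1)" and l1: "length L1 = n"
    and d2: "distinct L2" and i2: "independent (set L2)" and l2: "length L2 = n"
    and V: "span (set L1) = span (set L2)" and W: "span (set (take k L1)) = span (set (take k L2))"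
    and kn: "k \<le> n" and ij: "i < n" "j < k"
  shows "(\<Sum>l<k. representation (set L1) (L2!l) (L1!i) * representation (set L2) (L1!j) (L2!l))
       = (if i = j then 1 else 0)"
proof -
  have "L1!j \<in> span (set (take k L2))"
    unfolding W[symmetric] using ij kn l1 by (intro span_base) (auto simp: in_set_conv_nth)
  then have "(\<Sum>l<k. scale (representation (set L2) (L1!j) (L2!l)) (L2!l)) = L1!j"
    by (intro sum_take_representation[OF d2 i2]) (use kn l2 in simp)
  moreover have "representation (set L1) (\<Sum>l<k. scale (representation (set L2) (L1!j) (L2!l)) (L2!l)) (L1!i)
      = (\<Sum>l<k. representation (set L2) (L1!j) (L2!l) * representation (set L1) (L2!l) (L1!i))"
    by (rule representation_sum_scale[OF i1]) (use l2 kn in \<open>auto simp: V intro: span_base\<close>)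
  moreover have "representation (set L1) (L1!j) (L1!i) = (if i = j then 1 else 0)"
    using representation_nth_nth[OF d1 i1] ij kn l1 by simp
  ultimately show ?thesis by (simp add: mult.commute)
qed

lemma representation_change_basis:
  assumes i1: "independent (set L1)" and d2: "distinct L2" and i2: "independent (set L2)"
    and V: "span (set L1) = span (set L2)" and x: "x \<in> span (set L1)"
  shows "representation (set L1) x b
       = (\<Sum>r<length L2. representation (set L2) x (L2!r) * representation (set L1) (L2!r) b)"
proof -
  have "x = (\<Sum>r<length L2. scale (representation (set L2) x (L2!r)) (L2!r))"
    using sum_nth_representation[OF d2 i2, of x] x V by simp
  also have "representation (set L1) \<dots> b
      = (\<Sum>r<length L2. representation (set L2) x (L2!r) * representation (set L1) (L2!r) b)"
    by (rule representation_sum_scale[OF i1]) (auto simp: V intro: span_base)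
  finally show ?thesis .
qed

lemma matrix_of_map_change_basis:
  fixes T :: "'b \<Rightarrow> 'b"
  assumes d1: "distinct L1" and i1: "independent (set L1)" and l1: "length L1 = n"
    and d2: "distinct L2" and i2: "independent (set L2)" and l2: "length L2 = n"
    and V: "span (set L1) = span (set L2)" and W: "span (set (take k L1)) = span (set (take k L2))"
    and kn: "k \<le> n"
    and TV: "T ` span (set (take k L1)) \<subseteq> span (set L1)"
    and add: "\<forall>x\<in>span (set (take k L1)). \<forall>y\<in>span (set (take k L1)). T (x + y) = T x + T y"
    and sc: "\<forall>c. \<forall>x\<in>span (set (take k L1)). T (scale c x) = scale c (T x)"
    and ij: "i < n" "j < k"
  shows "matrix_of_map scale L1 k T $$ (i,j) = (\<Sum>l<k. \<Sum>r<n.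
           representation (set L1) (L2!r) (L1!i) * matrix_of_map scale L2 k T $$ (r,l)
           * representation (set L2) (L1!j) (L2!l))"
proof -
  let ?P = "\<lambda>l. representation (set L2) (L1!j) (L2!l)"
  have L2W: "L2 ! l \<in> span (set (take k L1))" if "l < k" for l
    unfolding W using that kn l2 by (intro span_base) (auto simp: in_set_conv_nth)
  have TL2V: "T (L2!l) \<in> span (set L1)" if "l < k" for l
    using TV L2W[OF that] by auto
  have "L1!j \<in> span (set (take k L2))"
    unfolding W[symmetric] using ij kn l1 by (intro span_base) (auto simp: in_set_conv_nth)
  then have "(\<Sum>l<k. scale (?P l) (L2!l)) = L1!j"
    by (intro sum_take_representation[OF d2 i2]) (use kn l2 in simp)
  then have "T (L1!j) = T (\<Sum>l<k. scale (?P l) (L2!l))" by simp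
  also have "\<dots> = (\<Sum>l<k. scale (?P l) (T (L2!l)))"
    by (rule linear_on_sum[OF subspace_span add sc]) (use L2W in auto)
  finally have "matrix_of_map scale L1 k T $$ (i,j)
      = (\<Sum>l<k. ?P l * representation (set L1) (T (L2!l)) (L1!i))"
    using ij l1 representation_sum_scale[OF i1, of "{..<k}"] TL2V by (simp add: matrix_of_map_index)
  also have "\<dots> = (\<Sum>l<k. \<Sum>r<n. representation (set L1) (L2!r) (L1!i)
                     * matrix_of_map scale L2 k T $$ (r,l) * ?P l)"
  proof (rule sum.cong[OF refl])
    fix l assume "l \<in> {..<k}"
    then have l: "l < k" by simp
    have "representation (set L1) (T (L2!l)) (L1!i)
        = (\<Sum>r<n. representation (set L1) (L2!r) (L1!i) * matrix_of_map scale L2 k T $$ (r,l))"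
      unfolding representation_change_basis[OF i1 d2 i2 V TL2V[OF l]] l2
      using l l2 by (intro sum.cong) (auto simp: matrix_of_map_index)
    then show "?P l * representation (set L1) (T (L2!l)) (L1!i) = (\<Sum>r<n. representation (set L1) (L2!r) (L1!i)
                     * matrix_of_map scale L2 k T $$ (r,l) * ?P l)"
      by (simp add: sum_distrib_left sum_distrib_right ac_simps)
  qed
  finally show ?thesis .
qed

lemma charmat_matrix_of_map_equivalent:
  fixes T :: "'b \<Rightarrow> 'b"
  assumes d1: "distinct L1" and i1: "independent (set L1)" and l1: "length L1 = n"
    and d2: "distinct L2" and i2: "independent (set L2)" and l2: "length L2 = n"
    and V: "span (set L1) = span (set L2)" and W: "span (set (take k L1)) = span (set (take k L2))"
    and kn: "k \<le> n"
    and TV: "T ` span (set (take k L1)) \<subseteq> span (set L1)"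
    and add: "\<forall>x\<in>span (set (take k L1)). \<forall>y\<in>span (set (take k L1)). T (x + y) = T x + T y"
    and sc: "\<forall>c. \<forall>x\<in>span (set (take k L1)). T (scale c x) = scale c (T x)"
  obtains Q P where "Q \<in> carrier_mat n n" "P \<in> carrier_mat k k"
    "charmat (matrix_of_map scale L1 k T) = Q * charmat (matrix_of_map scale L2 k T) * P"
proof -
  define Q0 where "Q0 = mat n n (\<lambda>(i,r). representation (set L1) (L2!r) (L1!i))"
  define P0 where "P0 = mat k k (\<lambda>(l,j). representation (set L2) (L1!j) (L2!l))"
  have "charmat (matrix_of_map scale L1 k T)
      = map_mat (\<lambda>a. [:a:]) Q0 * charmat (matrix_of_map scale L2 k T) * map_mat (\<lambda>a. [:a:]) P0"
  proof (rule charmat_change_of_coordinates)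
    show "matrix_of_map scale L1 k T \<in> carrier_mat n k" "matrix_of_map scale L2 k T \<in> carrier_mat n k"
      using matrix_of_map_carrier[of scale L1 k T] matrix_of_map_carrier[of scale L2 k T] l1 l2 by simp_all
    show "Q0 \<in> carrier_mat n n" "P0 \<in> carrier_mat k k" "k \<le> n" using kn by (simp_all add: Q0_def P0_def)
    show "matrix_of_map scale L1 k T $$ (i,j)
        = (\<Sum>l<k. \<Sum>r<n. Q0 $$ (i,r) * matrix_of_map scale L2 k T $$ (r,l) * P0 $$ (l,j))"
      if "i < n" "j < k" for i j
      unfolding matrix_of_map_change_basis[OF assms that]
      by (intro sum.cong refl) (simp add: Q0_def P0_def that)
    show "(\<Sum>l<k. Q0 $$ (i,l) * P0 $$ (l,j)) = (if i = j then 1 else 0)" if "i < n" "j < k" for i j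
      unfolding change_basis_mult_eq_id[OF d1 i1 l1 d2 i2 l2 V W kn that, symmetric]
      using that kn by (intro sum.cong refl) (simp add: Q0_def P0_def)
  qed
  then show thesis using that[of "map_mat (\<lambda>a. [:a:]) Q0" "map_mat (\<lambda>a. [:a:]) P0"]
    by (simp add: Q0_def P0_def)
qed

end

locale field_gcd_vector_space = vector_space scale
  for scale :: "'a::field_gcd \<Rightarrow> 'v::ab_group_add \<Rightarrow> 'v"
begin

lemma det_divisor_matrix_of_map_change_basis:
  fixes T :: "'v \<Rightarrow> 'v"
  assumes d1: "distinct L1" and i1: "independent (set L1)"
    and d2: "distinct L2" and i2: "independent (set L2)" and l12: "length L1 = length L2"
    and V: "span (set L1) = span (set L2)" and W: "span (set (take k L1)) = span (set (take k L2))"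
    and kn: "k \<le> length L1"
    and TV: "T ` span (set (take k L1)) \<subseteq> span (set L1)"
    and add: "\<forall>x\<in>span (set (take k L1)). \<forall>y\<in>span (set (take k L1)). T (x + y) = T x + T y"
    and sc: "\<forall>c. \<forall>x\<in>span (set (take k L1)). T (scale c x) = scale c (T x)"
  shows "det_divisor (charmat (matrix_of_map scale L1 k T)) k
       = det_divisor (charmat (matrix_of_map scale L2 k T)) k"
proof -
  obtain Q P where QP: "Q \<in> carrier_mat (length L1) (length L1)" "P \<in> carrier_mat k k"
    "charmat (matrix_of_map scale L1 k T) = Q * charmat (matrix_of_map scale L2 k T) * P"
    using charmat_matrix_of_map_equivalent[OF d1 i1 refl d2 i2 l12[symmetric] V W kn TV add sc] .
  obtain Q' P' where Q'P': "Q' \<in> carrier_mat (length L1) (length L1)" "P' \<in> carrier_mat k k"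
    "charmat (matrix_of_map scale L2 k T) = Q' * charmat (matrix_of_map scale L1 k T) * P'"
  proof (rule charmat_matrix_of_map_equivalent[OF d2 i2 l12[symmetric] d1 i1 refl V[symmetric] W[symmetric]])
    show "k \<le> length L1" by (rule kn)
    show "T ` span (set (take k L2)) \<subseteq> span (set L2)" using TV unfolding V W .
    show "\<forall>x\<in>span (set (take k L2)). \<forall>y\<in>span (set (take k L2)). T (x + y) = T x + T y"
      using add unfolding W .
    show "\<forall>c. \<forall>x\<in>span (set (take k L2)). T (scale c x) = scale c (T x)"
      using sc unfolding W .
  qed
  show ?thesis
    using det_divisor_maximal_eq_if_equivalent[OF charmat_matrix_of_map_carrier _ QP Q'P']
      charmat_matrix_of_map_carrier[of scale L2 k T] l12 by simp
qed

end

context vector_space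
begin

lemma independent_if_spanning_card_le_dim:
  assumes VB: "V \<subseteq> span B" and fin: "finite B" and card: "card B \<le> dim V"
  shows "independent B"
proof
  assume "dependent B"
  then obtain a where a: "a \<in> B" "a \<in> span (B - {a})" unfolding dependent_def by blast
  have "x \<in> span (B - {a})" if "x \<in> V" for x
  proof -
    have "x \<in> span (insert a (B - {a}))" using that VB a(1) by (simp add: insert_absorb subset_iff)
    then show ?thesis by (rule span_trans[OF a(2)])
  qed
  then have "dim V \<le> card (B - {a})" using fin by (intro dim_le_card) auto
  then show False using card card_Diff1_less[OF fin a(1)] by simp
qed

lemma basis_replace_prefix:
  assumes dist: "distinct bs" and indep: "independent (set bs)"
    and ws: "length ws = k" "k \<le> length bs" "span (set ws) = span (set (take k bs))"
  shows "distinct (ws @ drop k bs)" "independent (set (ws @ drop k bs))"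
    "span (set (ws @ drop k bs)) = span (set bs)"
proof -
  let ?bs' = "ws @ drop k bs"
  have "set ws \<subseteq> span (set (take k bs))" using ws(3) span_superset[of "set ws"] by simp
  also have "\<dots> \<subseteq> span (set bs)" by (rule span_mono) (rule set_take_subset)
  finally have sub1: "set ?bs' \<subseteq> span (set bs)"
    using set_drop_subset[of k bs] span_superset[of "set bs"] by auto
  have "set bs \<subseteq> span (set ?bs')"
  proof
    fix x assume x: "x \<in> set bs"
    have "set bs = set (take k bs) \<union> set (drop k bs)" by (metis append_take_drop_id set_append)
    then consider "x \<in> set (take k bs)" | "x \<in> set (drop k bs)" using x by blast
    then show "x \<in> span (set ?bs')"
    proof cases
      case 1
      then have "x \<in> span (set ws)" using ws(3) span_base by blast
      then show ?thesis using span_mono[of "set ws" "set ?bs'"] by auto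
    next
      case 2
      then show ?thesis by (auto intro: span_base)
    qed
  qed
  then have sub2: "span (set bs) \<subseteq> span (set ?bs')" by (rule span_minimal) simp
  then show "span (set ?bs') = span (set bs)" using span_minimal[OF sub1] by auto
  have dim: "dim (span (set bs)) = length ?bs'"
    using dim_span_eq_card_independent[OF indep] distinct_card[OF dist] ws by simp
  then have "length ?bs' \<le> card (set ?bs')" using dim_le_card[OF sub2] by simp
  then have "card (set ?bs') = length ?bs'" using card_length[of ?bs'] by linarith
  then show "distinct ?bs'" by (rule card_distinct)
  show "independent (set ?bs')"
    by (rule independent_if_spanning_card_le_dim[OF sub2]) (use dim card_length[of ?bs'] in auto)
qed

lemma exists_adapted_basis:
  assumes dist: "distinct bs" and indep: "independent (set bs)" and kn: "k \<le> length bs"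
    and U: "subspace U" "U \<subseteq> span (set (take k bs))"
  obtains bs' where "length bs' = length bs" "distinct bs'" "independent (set bs')"
    "span (set bs') = span (set bs)" "span (set (take k bs')) = span (set (take k bs))"
    "span (set (take (dim U) bs')) = U" "dim U \<le> k"
proof -
  define W where "W = span (set (take k bs))"
  have itk: "independent (set (take k bs))" using indep set_take_subset by (rule independent_mono)
  have dimW: "dim W = k"
    unfolding W_def using dim_span_eq_card_independent[OF itk] dist kn by (simp add: distinct_card)
  obtain BU where BU: "BU \<subseteq> U" "independent BU" "U \<subseteq> span BU" "card BU = dim U"
    using basis_exists by blast
  have "finite BU" using independent_span_bound[OF _ BU(2)] BU(1) U(2) by auto
  then obtain us where us: "set us = BU" "distinct us" using finite_distinct_list by blast
  have spanus: "span (set us) = U"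
    using us(1) BU(1,3) span_minimal[of "set us" U] U(1) by auto
  have lus: "length us = dim U" using BU(4) distinct_card[OF us(2)] us(1) by simp
  obtain BW where BW: "BU \<subseteq> BW" "BW \<subseteq> W" "independent BW" "W \<subseteq> span BW"
    using maximal_independent_subset_extend[of BU W] BU(1,2) U(2) unfolding W_def by blast
  have "finite BW" using independent_span_bound[OF _ BW(3)] BW(2) unfolding W_def by auto
  then obtain rest where rest: "set rest = BW - BU" "distinct rest" using finite_distinct_list by blast
  define ws where "ws = us @ rest"
  have sws: "set ws = BW" and dws: "distinct ws" unfolding ws_def using BW(1) us rest by auto
  have lws: "length ws = k"
    using distinct_card[OF dws] sws basis_card_eq_dim[OF BW(2) BW(4) BW(3)] dimW by simp
  have spws: "span (set ws) = W"
    using sws BW(2,4) span_minimal[of "set ws" W] unfolding W_def by auto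
  note bs' = basis_replace_prefix[OF dist indep lws kn spws[unfolded W_def]]
  show thesis
  proof (rule that[of "ws @ drop k bs"])
    show "span (set (take k (ws @ drop k bs))) = span (set (take k bs))"
      using lws spws by (simp add: W_def)
    show "span (set (take (dim U) (ws @ drop k bs))) = U" "dim U \<le> k"
      using lws lus spanus by (simp_all add: ws_def)
  qed (use bs' lws kn in simp_all)
qed

end

section \<open>The maximal invariant subspace\<close>

definition const_row :: "(nat \<Rightarrow> nat \<Rightarrow> 'a::comm_ring_1) \<Rightarrow> nat set \<Rightarrow> (nat \<Rightarrow> 'a poly) \<Rightarrow> nat \<Rightarrow> 'a poly" where
  "const_row \<beta> J u i = (\<Sum>j\<in>J. [:\<beta> i j:] * u j)"

definition char_row :: "(nat \<Rightarrow> nat \<Rightarrow> 'a::comm_ring_1) \<Rightarrow> nat set \<Rightarrow> (nat \<Rightarrow> 'a poly) \<Rightarrow> nat \<Rightarrow> 'a poly" where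
  "char_row \<beta> J u i = (\<Sum>j\<in>J. ((if i = j then [:0,1:] else 0) - [:\<beta> i j:]) * u j)"

definition mod_solutions :: "'a::field poly \<Rightarrow> (nat \<Rightarrow> nat \<Rightarrow> 'a) \<Rightarrow> nat set \<Rightarrow> nat set \<Rightarrow> (nat \<Rightarrow> 'a poly) set" where
  "mod_solutions p \<beta> I J =
     {u. (\<forall>j\<in>J. degree (u j) < degree p) \<and> (\<forall>i\<in>I. p dvd char_row \<beta> J u i)}"

lemma char_row_eq:
  assumes "finite J"
  shows "char_row \<beta> J u i = (if i \<in> J then [:0,1:] * u i else 0) - const_row \<beta> J u i"
proof -
  have "char_row \<beta> J u i = (\<Sum>j\<in>J. if i = j then [:0,1:] * u j else 0) - const_row \<beta> J u i"
    unfolding char_row_def const_row_def sum_subtractf[symmetric]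
    by (intro sum.cong) (auto simp: left_diff_distrib)
  then show ?thesis using assms by (simp add: sum.delta)
qed

lemma degree_const_row_less:
  assumes "u \<in> mod_solutions p \<beta> I J" "0 < degree p"
  shows "degree (const_row \<beta> J u i) < degree p"
  unfolding const_row_def
proof (rule degree_sum_less)
  fix j assume "j \<in> J"
  then show "degree ([:\<beta> i j:] * u j) < degree p"
    using assms(1) degree_mult_le[of "[:\<beta> i j:]" "u j"] unfolding mod_solutions_def by auto
qed (rule assms(2))

lemma const_row_eq_0_outside:
  assumes u: "u \<in> mod_solutions p \<beta> I J" and p: "0 < degree p" and J: "finite J"
    and i: "i \<in> I" "i \<notin> J"
  shows "const_row \<beta> J u i = 0"
proof (rule ccontr)
  have "p dvd char_row \<beta> J u i" using u i unfolding mod_solutions_def by blast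
  then have dvd: "p dvd const_row \<beta> J u i" using char_row_eq[OF J, of \<beta> u i] i by simp
  assume "const_row \<beta> J u i \<noteq> 0"
  with dvd have "degree p \<le> degree (const_row \<beta> J u i)" by (rule dvd_imp_degree_le)
  then show False using degree_const_row_less[OF u p, of i] by linarith
qed

text \<open>Modulo \<open>p\<close> the constant part \<open>\<beta> u\<close> agrees with \<open>x u\<close> on \<open>J\<close>, so this is
  multiplication by \<open>x\<close> on the solution module.\<close>
lemma const_row_mod_solutions:
  assumes u: "u \<in> mod_solutions p \<beta> I J" and p: "0 < degree p" and JI: "J \<subseteq> I" and J: "finite J"
  shows "(\<lambda>j. if j \<in> J then const_row \<beta> J u j else 0) \<in> mod_solutions p \<beta> I J"
    (is "?v \<in> _")
proof -
  have "p dvd char_row \<beta> J ?v i" if i: "i \<in> I" for i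
  proof -
    let ?c = "\<lambda>j. (if i = j then [:0,1:] else 0) - [:\<beta> i j:]"
    have "const_row \<beta> J u j = [:0,1:] * u j - char_row \<beta> J u j" if "j \<in> J" for j
      using char_row_eq[OF J, of \<beta> u j] that by simp
    then have "char_row \<beta> J ?v i = (\<Sum>j\<in>J. ?c j * ([:0,1:] * u j - char_row \<beta> J u j))"
      unfolding char_row_def by (intro sum.cong) auto
    also have "\<dots> = [:0,1:] * char_row \<beta> J u i - (\<Sum>j\<in>J. ?c j * char_row \<beta> J u j)"
      unfolding char_row_def
      by (simp add: right_diff_distrib sum_subtractf sum_distrib_left mult.left_commute)
    finally have eq: "char_row \<beta> J ?v i = [:0,1:] * char_row \<beta> J u i - (\<Sum>j\<in>J. ?c j * char_row \<beta> J u j)" .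
    have "p dvd char_row \<beta> J u j" if "j \<in> I" for j using u that unfolding mod_solutions_def by blast
    then have "p dvd [:0,1:] * char_row \<beta> J u i" "p dvd (\<Sum>j\<in>J. ?c j * char_row \<beta> J u j)"
      using i JI by (blast intro: dvd_mult, blast intro: dvd_sum dvd_mult)
    then show ?thesis unfolding eq by (rule dvd_diff)
  qed
  then show ?thesis
    using degree_const_row_less[OF u p] unfolding mod_solutions_def by auto
qed

locale adapted_basis = field_gcd_vector_space scale
  for scale :: "'a::field_gcd \<Rightarrow> 'v::ab_group_add \<Rightarrow> 'v" +
  fixes L :: "'v list" and k m :: nat and T :: "'v \<Rightarrow> 'v"
  assumes distinct_L: "distinct L" and independent_L: "independent (set L)"
    and m_le_k: "m \<le> k" and k_le_length: "k \<le> length L"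
    and T_into: "T ` span (set (take k L)) \<subseteq> span (set L)"
    and T_add: "\<forall>x\<in>span (set (take k L)). \<forall>y\<in>span (set (take k L)). T (x + y) = T x + T y"
    and T_scale: "\<forall>c. \<forall>x\<in>span (set (take k L)). T (scale c x) = scale c (T x)"
    and max_inv_eq_span_take_m: "max_inv_subspace scale (span (set (take k L))) T = span (set (take m L))"
begin

abbreviation mat_T :: "'a mat" where "mat_T \<equiv> matrix_of_map scale L k T"

abbreviation entry_T :: "nat \<Rightarrow> nat \<Rightarrow> 'a" where "entry_T i j \<equiv> mat_T $$ (i,j)"

lemma nth_in_span_take: "i < j \<Longrightarrow> j \<le> length L \<Longrightarrow> L ! i \<in> span (set (take j L))"
  by (intro span_base) (auto simp: in_set_conv_nth intro!: exI[of _ i])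

lemma span_take_m_invariant: "T ` span (set (take m L)) \<subseteq> span (set (take m L))"
  using max_inv_subspace(3)[OF subspace_span T_add T_scale] max_inv_eq_span_take_m by simp

lemma span_take_m_greatest:
  "subspace U \<Longrightarrow> U \<subseteq> span (set (take k L)) \<Longrightarrow> T ` U \<subseteq> U \<Longrightarrow> U \<subseteq> span (set (take m L))"
  using max_inv_subspace(4)[OF subspace_span T_add T_scale] max_inv_eq_span_take_m by simp

lemma representation_eq_0_if_in_span_take_m:
  assumes "x \<in> span (set (take m L))" "m \<le> i" "i < length L"
  shows "representation (set L) x (L!i) = 0"
proof (rule representation_eq_0_outside[OF independent_L set_take_subset assms(1)])
  have "L!i \<in> set (drop m L)" using assms(2,3) by (auto simp: in_set_conv_nth intro!: exI[of _ "i - m"])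
  then show "L!i \<notin> set (take m L)" using set_take_disj_set_drop_if_distinct[OF distinct_L, of m m] by auto
qed

lemma representation_sum_nth:
  assumes "J \<subseteq> {..<length L}" "i < length L"
  shows "representation (set L) (\<Sum>j\<in>J. scale (c j) (L!j)) (L!i) = (if i \<in> J then c i else 0)"
proof -
  have "finite J" using assms(1) by (rule finite_subset) simp
  have "representation (set L) (\<Sum>j\<in>J. scale (c j) (L!j)) (L!i)
      = (\<Sum>j\<in>J. c j * representation (set L) (L!j) (L!i))"
    by (rule representation_sum_scale[OF independent_L]) (use assms(1) in \<open>auto intro!: span_base\<close>)
  also have "\<dots> = (\<Sum>j\<in>J. if i = j then c j else 0)"
    using assms representation_nth_nth[OF distinct_L independent_L] by (intro sum.cong) auto
  finally show ?thesis using \<open>finite J\<close> by simp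
qed

lemma T_nth_eq: "j < k \<Longrightarrow> T (L!j) = (\<Sum>i<length L. scale (entry_T i j) (L!i))"
  using sum_nth_representation[OF distinct_L independent_L, of "T (L!j)"] T_into
    nth_in_span_take[of j k] k_le_length by (auto simp: matrix_of_map_index)

lemma mat_T_lower_left_zero: "j < m \<Longrightarrow> m \<le> i \<Longrightarrow> i < length L \<Longrightarrow> entry_T i j = 0"
  using representation_eq_0_if_in_span_take_m[of "T (L!j)" i] span_take_m_invariant
    nth_in_span_take[of j m] m_le_k k_le_length by (auto simp: matrix_of_map_index)

definition coeff_vec :: "(nat \<Rightarrow> 'a poly) \<Rightarrow> nat \<Rightarrow> 'v" where
  "coeff_vec u l = (\<Sum>j\<in>{m..<k}. scale (coeff (u j) l) (L!j))"

lemma coeff_vec_in_span_take_k: "coeff_vec u l \<in> span (set (take k L))"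
  unfolding coeff_vec_def using nth_in_span_take k_le_length
  by (intro span_sum span_scale) auto

lemma representation_coeff_vec:
  assumes "j \<in> {m..<k}"
  shows "representation (set L) (coeff_vec u l) (L!j) = coeff (u j) l"
proof -
  have "{m..<k} \<subseteq> {..<length L}" using k_le_length by auto
  then show ?thesis
    unfolding coeff_vec_def using representation_sum_nth[of "{m..<k}" j "\<lambda>j. coeff (u j) l"] assms
    by auto
qed

lemma coeff_const_row: "coeff (const_row \<beta> J u i) l = (\<Sum>j\<in>J. \<beta> i j * coeff (u j) l)"
  unfolding const_row_def coeff_sum by simp

lemma T_coeff_vec:
  "T (coeff_vec u l) = (\<Sum>i<length L. scale (coeff (const_row entry_T {m..<k} u i) l) (L!i))"
proof -
  let ?c = "\<lambda>j. coeff (u j) l"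
  have "T (coeff_vec u l) = (\<Sum>j\<in>{m..<k}. scale (?c j) (T (L!j)))"
    unfolding coeff_vec_def
    by (rule linear_on_sum[OF subspace_span T_add T_scale]) (use nth_in_span_take k_le_length in auto)
  also have "\<dots> = (\<Sum>j\<in>{m..<k}. \<Sum>i<length L. scale (?c j * entry_T i j) (L!i))"
    by (intro sum.cong refl) (simp add: T_nth_eq scale_sum_right)
  also have "\<dots> = (\<Sum>i<length L. scale (\<Sum>j\<in>{m..<k}. entry_T i j * ?c j) (L!i))"
    by (subst sum.swap) (simp add: scale_sum_left mult.commute)
  finally show ?thesis by (simp add: coeff_const_row)
qed

lemma T_coeff_vec_diff_in_span_take_m:
  assumes u: "u \<in> mod_solutions p entry_T {m..<length L} {m..<k}" and p: "0 < degree p"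
  shows "T (coeff_vec u l) - coeff_vec (\<lambda>j. if j \<in> {m..<k} then const_row entry_T {m..<k} u j else 0) l
    \<in> span (set (take m L))"
proof -
  let ?J = "{m..<k}"
  let ?f = "\<lambda>i. scale (coeff (const_row entry_T ?J u i) l) (L!i)"
  have "coeff_vec (\<lambda>j. if j \<in> ?J then const_row entry_T ?J u j else 0) l = (\<Sum>j\<in>?J. ?f j)"
    unfolding coeff_vec_def by (intro sum.cong) auto
  then have "T (coeff_vec u l) - coeff_vec (\<lambda>j. if j \<in> ?J then const_row entry_T ?J u j else 0) l
      = (\<Sum>i\<in>{..<length L} - ?J. ?f i)"
    using k_le_length sum_diff[of "{..<length L}" ?J ?f] by (simp add: T_coeff_vec subset_iff)
  also have "\<dots> \<in> span (set (take m L))"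
  proof (rule span_sum)
    fix i assume i: "i \<in> {..<length L} - ?J"
    show "?f i \<in> span (set (take m L))"
    proof (cases "i < m")
      case True
      then show ?thesis using nth_in_span_take[of i m] m_le_k k_le_length by (simp add: span_scale)
    next
      case False
      then have "const_row entry_T ?J u i = 0"
        using const_row_eq_0_outside[OF u p] i by simp
      then show ?thesis by (simp add: span_zero)
    qed
  qed
  finally show ?thesis .
qed

text \<open>The coefficient vectors of all solutions, together with the span of the first \<open>m\<close> basis
  vectors, span a \<open>T\<close>-invariant subspace of \<open>W\<close>; by maximality it adds nothing.\<close>
lemma mod_solutions_eq_0:
  assumes u: "u \<in> mod_solutions p entry_T {m..<length L} {m..<k}" and p: "0 < degree p"
    and j: "j \<in> {m..<k}"
  shows "u j = 0"
proof -
  let ?sols = "mod_solutions p entry_T {m..<length L} {m..<k}"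
  define S where "S = span (set (take m L)) \<union> {coeff_vec v l | v l. v \<in> ?sols}"
  have "span (set (take m L)) \<subseteq> span (set (take k L))"
    using m_le_k by (intro span_mono) (simp add: set_take_subset_set_take)
  then have SW: "S \<subseteq> span (set (take k L))" using coeff_vec_in_span_take_k unfolding S_def by blast
  have TS: "T s \<in> span S" if s: "s \<in> S" for s
  proof (cases "s \<in> span (set (take m L))")
    case True
    then have "T s \<in> S" using span_take_m_invariant unfolding S_def by blast
    then show ?thesis by (rule span_base)
  next
    case False
    then obtain v l where v: "v \<in> ?sols" and s: "s = coeff_vec v l" using s unfolding S_def by blast
    let ?v' = "\<lambda>j. if j \<in> {m..<k} then const_row entry_T {m..<k} v j else 0"
    have "?v' \<in> ?sols" using const_row_mod_solutions[OF v p] k_le_length by auto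
    then have "coeff_vec ?v' l \<in> span S" unfolding S_def by (blast intro: span_base)
    moreover have "T s - coeff_vec ?v' l \<in> span S"
      using T_coeff_vec_diff_in_span_take_m[OF v p, of l] s unfolding S_def by (blast intro: span_base)
    ultimately have "(T s - coeff_vec ?v' l) + coeff_vec ?v' l \<in> span S" by (rule span_add[rotated])
    then show ?thesis by simp
  qed
  have "span S \<subseteq> span (set (take m L))"
    using span_invariant_if_generators_invariant[OF subspace_span T_add T_scale SW TS]
    by (intro span_take_m_greatest) simp_all
  then have "coeff_vec u (degree (u j)) \<in> span (set (take m L))"
    using u unfolding S_def by (blast intro: span_base)
  then have "representation (set L) (coeff_vec u (degree (u j))) (L!j) = 0"
    using j k_le_length by (intro representation_eq_0_if_in_span_take_m) auto
  then show ?thesis using representation_coeff_vec[OF j] by simp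
qed

lemma char_row_shift:
  assumes r: "r < length L - m"
  shows "char_row entry_T {m..<k} (\<lambda>j. w (j - m)) (m + r)
       = (\<Sum>j<k-m. charmat (lower_right m mat_T) $$ (r,j) * w j)"
proof -
  have dims: "dim_row mat_T = length L" "dim_col mat_T = k"
    using matrix_of_map_carrier[of scale L k T] by auto
  show ?thesis
    unfolding char_row_def sum.atLeastLessThan_shift_0[of _ m k] atLeast0LessThan
    using r by (intro sum.cong) (auto simp: lower_right_def dims)
qed

lemma degree_eq_0_if_dvd_lower_right_minors:
  assumes p_dvd: "\<And>f. (\<And>r. r < k - m \<Longrightarrow> f r < length L - m) \<Longrightarrow>
      p dvd det (sel_mat (k-m) (charmat (lower_right m mat_T)) f id)"
  shows "degree p = 0"
proof (rule ccontr)
  assume "degree p \<noteq> 0"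
  have N: "charmat (lower_right m mat_T) \<in> carrier_mat (length L - m) (k - m)"
    using matrix_of_map_carrier[of scale L k T] charmat_carrier[of "lower_right m mat_T"]
    by (simp add: lower_right_def)
  obtain w where w_deg: "\<And>j. j < k - m \<Longrightarrow> degree (w j) < degree p"
    and w_nz: "\<exists>j<k-m. w j \<noteq> 0"
    and w_dvd: "\<And>r. r < length L - m \<Longrightarrow> p dvd (\<Sum>j<k-m. charmat (lower_right m mat_T) $$ (r,j) * w j)"
    using exists_low_degree_solution_mod[OF N _ p_dvd] \<open>degree p \<noteq> 0\<close> by blast
  have sol: "(\<lambda>j. w (j - m)) \<in> mod_solutions p entry_T {m..<length L} {m..<k}"
    unfolding mod_solutions_def
  proof (intro CollectI conjI ballI)
    fix i assume "i \<in> {m..<length L}"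
    then have i: "m \<le> i" "i - m < length L - m" by auto
    then have "char_row entry_T {m..<k} (\<lambda>j. w (j - m)) i
        = (\<Sum>j<k-m. charmat (lower_right m mat_T) $$ (i - m, j) * w j)"
      using char_row_shift[OF i(2), of w] by simp
    then show "p dvd char_row entry_T {m..<k} (\<lambda>j. w (j - m)) i" using w_dvd[OF i(2)] by simp
  qed (use w_deg in auto)
  obtain j where j: "j < k - m" "w j \<noteq> 0" using w_nz by blast
  then have "m + j \<in> {m..<k}" by auto
  then have "w (m + j - m) = 0" using mod_solutions_eq_0[OF sol] \<open>degree p \<noteq> 0\<close> by blast
  then show False using j by simp
qed

lemma degree_det_divisor_charmat:
  assumes "0 < k"
  shows "degree (det_divisor (charmat mat_T) k) = m"
proof -
  have B: "mat_T \<in> carrier_mat (length L) k" by (rule matrix_of_map_carrier)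
  define \<chi> where "\<chi> = char_poly (upper_left m mat_T)"
  define p where "p = det_divisor (charmat mat_T) k div \<chi>"
  have "\<chi> dvd det_divisor (charmat mat_T) k"
    unfolding \<chi>_def
    by (rule char_poly_dvd_det_divisor_charmat[OF B m_le_k k_le_length assms],
        (rule mat_T_lower_left_zero; assumption))
  then have dp: "det_divisor (charmat mat_T) k = \<chi> * p" unfolding p_def by simp
  have "degree p = 0"
    unfolding p_def \<chi>_def
    by (rule degree_eq_0_if_dvd_lower_right_minors,
        rule det_divisor_charmat_div_char_poly_dvd[OF B m_le_k k_le_length assms],
        (rule mat_T_lower_left_zero; assumption), assumption)
  moreover have "det_divisor (charmat mat_T) k \<noteq> 0"
    using det_divisor_charmat_nonzero[OF B k_le_length _ order_refl] assms by simp
  moreover have "degree \<chi> = m"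
    using degree_monic_char_poly[of "upper_left m mat_T" m] by (auto simp: \<chi>_def upper_left_def)
  ultimately show ?thesis using dp by (simp add: degree_mult_eq)
qed

end

theorem mainTheorem1:
  fixes scale :: "'a::{field_gcd,finite} \<Rightarrow> 'v::ab_group_add \<Rightarrow> 'v"
    and bs :: "'v list" and k :: nat and T :: "'v \<Rightarrow> 'v"
    and V W :: "'v set"
  assumes vs: "vector_space scale"
    and dist: "distinct bs"
    and indep: "module.independent scale (set bs)"
    and V_def: "V = module.span scale (set bs)"
    and k_pos: "0 < k" and kn: "k \<le> length bs"
    and W_def: "W = module.span scale (set (take k bs))"
    and T_into: "T ` W \<subseteq> V"
    and T_add: "\<forall>x\<in>W. \<forall>y\<in>W. T (x + y) = T x + T y"
    and T_scale: "\<forall>c. \<forall>x\<in>W. T (scale c x) = scale c (T x)"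
  shows "vector_space.dim scale (max_inv_subspace scale W T)
           = degree (\<Prod>i = 1..k. inv_factor (charmat (matrix_of_map scale bs k T)) i)"
proof -
  interpret field_gcd_vector_space scale unfolding field_gcd_vector_space_def by (rule vs)
  define U where "U = max_inv_subspace scale W T"
  have "subspace W" unfolding W_def by simp
  note U = max_inv_subspace[OF this T_add T_scale, folded U_def]
  obtain bs' where bs': "length bs' = length bs" "distinct bs'" "independent (set bs')"
      "span (set bs') = V" "span (set (take k bs')) = W" "span (set (take (dim U) bs')) = U" "dim U \<le> k"
    using exists_adapted_basis[OF dist indep kn U(1) U(2)[unfolded W_def]] unfolding V_def W_def by blast
  interpret adapted: adapted_basis scale bs' k "dim U" T
    using bs' kn T_into T_add T_scale U_def by unfold_locales simp_all
  have "det_divisor (charmat (matrix_of_map scale bs k T)) k = det_divisor (charmat adapted.mat_T) k"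
    using bs' kn T_into T_add T_scale
    by (intro det_divisor_matrix_of_map_change_basis dist indep) (simp_all add: V_def W_def)
  moreover have "(\<Prod>i = 1..k. inv_factor (charmat (matrix_of_map scale bs k T)) i)
      = det_divisor (charmat (matrix_of_map scale bs k T)) k"
    by (intro prod_inv_factor det_divisor_charmat_nonzero[OF matrix_of_map_carrier kn])
  ultimately show ?thesis
    using adapted.degree_det_divisor_charmat[OF k_pos] by (simp add: U_def)
qed

end
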